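(* Let $\mathbb{K}\in\{\mathbb{R},\mathbb{C}\}$, $\star\in\{*,T\}$, $\epsilon_1,\epsilon_2\in\{1,-1\}$, and let $Q(\lambda)=\lambda^2M+\lambda D+K\in\mathbb{K}^{n\times n}[\lambda]$ satisfy $M^\star=\epsilon_1M$, $D^\star=\epsilon_2D$, $K^\star=\epsilon_1K$. Let $(X,\Lambda)\in\mathbb{K}^{n\times p}\times\mathbb{K}^{p\times p}$ be an invariant pair of $Q(\lambda)$ and $S:=X^\star MX\Lambda+\epsilon_1\epsilon_2\Lambda^\star X^\star MX+X^\star DX$. Then $S^\star=\epsilon_2S$ and $S\Lambda=\epsilon_1\epsilon_2\Lambda^\star S=\epsilon_1(S\Lambda)^\star$.
   Context: For a matrix $A$, $A^*$ is the conjugate transpose and $A^T$ the transpose; $A^\star$ means $A^*$ if $\star=*$ and $A^T$ if $\star=T$. A pair $(X,\Lambda)$ is an invariant pair of $Q(\lambda)$ if $MX\Lambda^2+DX\Lambda+KX=0$. *)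

theory Defs
  imports "Jordan_Normal_Form.Matrix" "Jordan_Normal_Form.Conjugate"
begin

datatype star_op = Star | Tr

definition star_mat :: "star_op \<Rightarrow> 'a::conjugatable_field mat \<Rightarrow> 'a mat" where
  "star_mat s A = (case s of Star \<Rightarrow> transpose_mat (map_mat conjugate A)
                           | Tr \<Rightarrow> transpose_mat A)"

definition invariant_pair :: "'a::field mat \<Rightarrow> 'a mat \<Rightarrow> 'a mat \<Rightarrow> 'a mat \<Rightarrow> 'a mat \<Rightarrow> bool" where
  "invariant_pair M D K X L \<longleftrightarrow> M * X * L * L + D * X * L + K * X = 0\<^sub>m (dim_row M) (dim_col L)"

definition S_mat :: "star_op \<Rightarrow> 'a::conjugatable_field \<Rightarrow> 'a \<Rightarrow> 'a mat \<Rightarrow> 'a mat \<Rightarrow> 'a mat \<Rightarrow> 'a mat \<Rightarrow> 'a mat" where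
  "S_mat s e1 e2 M D X L =
     star_mat s X * M * X * L + (e1 * e2) \<cdot>\<^sub>m (star_mat s L * star_mat s X * M * X) + star_mat s X * D * X"

end

theory Submission
  imports Defs
begin

(* Compress by X: the p x p matrices A = X^* M X, B = X^* D X, C = X^* K X inherit the
   symmetries of M, D, K, and S = A L + e1 e2 L^* A + B.  Multiplying the invariant-pair
   equation by X^* gives A L^2 + B L + C = 0; applying the involution to it and multiplying
   by e1 gives L^* L^* A + e1 e2 L^* B + C = 0.  Hence S L and e1 e2 L^* S both equal
   e1 e2 L^* A L - C.  The symmetry S^* = e2 S is a direct computation, and then
   (S L)^* = L^* S^* = e2 L^* S yields the last identity. *)

lemma conjugate_one [simp]: "conjugate (1::'a::conjugatable_field) = 1"
  using conjugate_dist_mul[of 1 "conjugate (1::'a)"] by simp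

lemma conjugate_sign: "e \<in> {1, -1} \<Longrightarrow> conjugate (e::'a::conjugatable_field) = e"
  by (auto simp: conjugate_neg)

lemma smult_smult_mat: "a \<cdot>\<^sub>m (b \<cdot>\<^sub>m A) = (a * b :: 'a::semigroup_mult) \<cdot>\<^sub>m A"
  by (rule eq_matI) (auto simp: mult.assoc)

(* Unlike mult_carrier_mat, this has no dimension hidden in its premises, so simp can use it. *)
lemma mult_carrier_square: "A \<in> carrier_mat n n \<Longrightarrow> B \<in> carrier_mat n n \<Longrightarrow> A * B \<in> carrier_mat n n"
  by simp

lemma star_mat_carrier [simp]: "A \<in> carrier_mat n m \<Longrightarrow> star_mat s A \<in> carrier_mat m n"
  by (cases s) (auto simp: star_mat_def)

lemma dim_star_mat [simp]:
  "dim_row (star_mat s A) = dim_col A" "dim_col (star_mat s A) = dim_row A"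
  by (cases s; simp add: star_mat_def)+

lemma star_mat_star_mat [simp]: "star_mat s (star_mat s A) = A"
  by (cases s; rule eq_matI) (auto simp: star_mat_def)

lemma star_mat_zero [simp]: "star_mat s (0\<^sub>m n m) = 0\<^sub>m m n"
  by (cases s; rule eq_matI) (auto simp: star_mat_def)

lemma star_mat_add:
  "A \<in> carrier_mat n m \<Longrightarrow> B \<in> carrier_mat n m \<Longrightarrow> star_mat s (A + B) = star_mat s A + star_mat s B"
  by (cases s; rule eq_matI) (auto simp: star_mat_def conjugate_dist_add)

lemma star_mat_smult: "conjugate c = c \<Longrightarrow> star_mat s (c \<cdot>\<^sub>m A) = c \<cdot>\<^sub>m star_mat s A"
  by (cases s; rule eq_matI) (auto simp: star_mat_def conjugate_dist_mul)

lemma star_mat_mult: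
  assumes "A \<in> carrier_mat n m" "B \<in> carrier_mat m k"
  shows "star_mat s (A * B) = star_mat s B * star_mat s A"
proof (cases s)
  case Star
  show ?thesis unfolding Star star_mat_def
    by (rule eq_matI) (use assms in \<open>auto simp: scalar_prod_def sum_conjugate conjugate_dist_mul
        mult.commute intro!: sum.cong\<close>)
next
  case Tr
  show ?thesis unfolding Tr star_mat_def using assms by (simp add: transpose_mult)
qed

lemma star_mat_congruence:
  assumes N: "N \<in> carrier_mat n n" and X: "X \<in> carrier_mat n p"
    and sN: "star_mat s N = c \<cdot>\<^sub>m N" and c: "conjugate c = c"
  shows "star_mat s (star_mat s X * N * X) = c \<cdot>\<^sub>m (star_mat s X * N * X)"
proof -
  have X': "star_mat s X \<in> carrier_mat p n" using X by simp
  have X'N: "star_mat s X * N \<in> carrier_mat p n" using X' N by (rule mult_carrier_mat)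
  have NX: "N * X \<in> carrier_mat n p" using N X by (rule mult_carrier_mat)
  have "star_mat s (star_mat s X * N * X) = star_mat s X * (star_mat s N * X)"
    using star_mat_mult[OF X'N X] star_mat_mult[OF X' N] by simp
  also have "\<dots> = c \<cdot>\<^sub>m (star_mat s X * (N * X))"
    using sN mult_smult_assoc_mat[OF N X] mult_smult_distrib[OF X' NX] by simp
  also have "\<dots> = c \<cdot>\<^sub>m (star_mat s X * N * X)"
    using assoc_mult_mat[OF X' N X] by simp
  finally show ?thesis .
qed

lemma invariant_pair_mult_left:
  assumes "invariant_pair M D K X L"
    and M: "M \<in> carrier_mat n n" and D: "D \<in> carrier_mat n n" and K: "K \<in> carrier_mat n n"
    and X: "X \<in> carrier_mat n p" and L: "L \<in> carrier_mat p p" and Y: "Y \<in> carrier_mat q n"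
  shows "Y * M * X * L * L + Y * D * X * L + Y * K * X = 0\<^sub>m q p"
proof -
  have MX: "M * X \<in> carrier_mat n p" and DX: "D * X \<in> carrier_mat n p"
    and KX: "K * X \<in> carrier_mat n p" and MXL: "M * X * L \<in> carrier_mat n p"
    and MXLL: "M * X * L * L \<in> carrier_mat n p" and DXL: "D * X * L \<in> carrier_mat n p"
    using M D K X L by auto
  have "Y * M * X * L * L = Y * (M * X * L * L)"
    using assoc_mult_mat[OF Y M X] assoc_mult_mat[OF Y MX L] assoc_mult_mat[OF Y MXL L] by simp
  moreover have "Y * D * X * L = Y * (D * X * L)"
    using assoc_mult_mat[OF Y D X] assoc_mult_mat[OF Y DX L] by simp
  moreover have "Y * K * X = Y * (K * X)"
    using assoc_mult_mat[OF Y K X] .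
  moreover have "Y * (M * X * L * L) + Y * (D * X * L) + Y * (K * X)
      = Y * (M * X * L * L + D * X * L + K * X)"
    using mult_add_distrib_mat[OF Y add_carrier_mat[OF DXL, of "M * X * L * L"] KX]
      mult_add_distrib_mat[OF Y MXLL DXL] by simp
  moreover have "M * X * L * L + D * X * L + K * X = 0\<^sub>m n p"
    using assms unfolding invariant_pair_def by simp
  ultimately show ?thesis
    using Y by simp
qed

definition S_proj :: "star_op \<Rightarrow> 'a::conjugatable_field \<Rightarrow> 'a mat \<Rightarrow> 'a mat \<Rightarrow> 'a mat \<Rightarrow> 'a mat" where
  "S_proj s e A B L = A * L + e \<cdot>\<^sub>m (star_mat s L * A) + B"

lemma S_proj_carrier:
  "A \<in> carrier_mat p p \<Longrightarrow> B \<in> carrier_mat p p \<Longrightarrow> L \<in> carrier_mat p p \<Longrightarrow> S_proj s e A B L \<in> carrier_mat p p"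
  unfolding S_proj_def by (simp add: mult_carrier_square)

lemma star_mat_S_proj:
  fixes A B L :: "'a::conjugatable_field mat"
  assumes A: "A \<in> carrier_mat p p" and B: "B \<in> carrier_mat p p" and L: "L \<in> carrier_mat p p"
    and e1: "e1 \<in> {1, -1}" and e2: "e2 \<in> {1, -1}"
    and sA: "star_mat s A = e1 \<cdot>\<^sub>m A" and sB: "star_mat s B = e2 \<cdot>\<^sub>m B"
  shows "star_mat s (S_proj s (e1 * e2) A B L) = e2 \<cdot>\<^sub>m S_proj s (e1 * e2) A B L"
proof -
  let ?L' = "star_mat s L"
  have conj: "conjugate (e1 * e2) = e1 * e2"
    using conjugate_sign[OF e1] conjugate_sign[OF e2] by (simp add: conjugate_dist_mul)
  have "star_mat s (S_proj s (e1 * e2) A B L)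
      = e1 \<cdot>\<^sub>m (?L' * A) + ((e1 * e2) * e1) \<cdot>\<^sub>m (A * L) + e2 \<cdot>\<^sub>m B"
    unfolding S_proj_def using A B L sA sB conj
    by (simp add: mult_carrier_square star_mat_add[of _ p p] star_mat_mult[of _ p p _ p] star_mat_smult
        mult_smult_distrib[of _ p p _ p] mult_smult_assoc_mat[of _ p p _ p] smult_smult_mat)
  also have "\<dots> = e2 \<cdot>\<^sub>m S_proj s (e1 * e2) A B L"
    unfolding S_proj_def
    by (rule eq_matI) (use A B L e1 e2 in \<open>auto simp: algebra_simps\<close>)
  finally show ?thesis .
qed

lemma star_mat_quadratic:
  fixes A B C L :: "'a::conjugatable_field mat"
  assumes A: "A \<in> carrier_mat p p" and B: "B \<in> carrier_mat p p" and C: "C \<in> carrier_mat p p"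
    and L: "L \<in> carrier_mat p p" and e1: "e1 \<in> {1, -1}" and e2: "e2 \<in> {1, -1}"
    and sA: "star_mat s A = e1 \<cdot>\<^sub>m A" and sB: "star_mat s B = e2 \<cdot>\<^sub>m B" and sC: "star_mat s C = e1 \<cdot>\<^sub>m C"
    and quad: "A * L * L + B * L + C = 0\<^sub>m p p"
  shows "star_mat s L * star_mat s L * A + (e1 * e2) \<cdot>\<^sub>m (star_mat s L * B) + C = 0\<^sub>m p p"
proof -
  let ?L' = "star_mat s L"
  have "0\<^sub>m p p = star_mat s (A * L * L + B * L + C)"
    using quad by simp
  also have "\<dots> = e1 \<cdot>\<^sub>m (?L' * ?L' * A) + e2 \<cdot>\<^sub>m (?L' * B) + e1 \<cdot>\<^sub>m C"
    using A B C L sA sB sC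
    by (simp add: mult_carrier_square star_mat_add[of _ p p] star_mat_mult[of _ p p _ p]
        mult_smult_distrib[of _ p p _ p])
  finally have "e1 \<cdot>\<^sub>m (e1 \<cdot>\<^sub>m (?L' * ?L' * A) + e2 \<cdot>\<^sub>m (?L' * B) + e1 \<cdot>\<^sub>m C) = 0\<^sub>m p p"
    by (metis smult_zero_mat)
  moreover have "e1 \<cdot>\<^sub>m (e1 \<cdot>\<^sub>m (?L' * ?L' * A) + e2 \<cdot>\<^sub>m (?L' * B) + e1 \<cdot>\<^sub>m C)
      = ?L' * ?L' * A + (e1 * e2) \<cdot>\<^sub>m (?L' * B) + C"
    by (rule eq_matI) (use A B C L e1 e2 in \<open>auto simp: algebra_simps\<close>)
  ultimately show ?thesis by simp
qed

lemma S_proj_mult_commute: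
  fixes A B C L :: "'a::conjugatable_field mat"
  assumes A: "A \<in> carrier_mat p p" and B: "B \<in> carrier_mat p p" and C: "C \<in> carrier_mat p p"
    and L: "L \<in> carrier_mat p p" and e: "e * e = 1"
    and quad: "A * L * L + B * L + C = 0\<^sub>m p p"
    and quad': "star_mat s L * star_mat s L * A + e \<cdot>\<^sub>m (star_mat s L * B) + C = 0\<^sub>m p p"
  shows "S_proj s e A B L * L = e \<cdot>\<^sub>m (star_mat s L * S_proj s e A B L)"
proof -
  let ?L' = "star_mat s L"
  have "S_proj s e A B L * L = A * L * L + e \<cdot>\<^sub>m (?L' * A * L) + B * L"
    unfolding S_proj_def using A B L
    by (simp add: mult_carrier_square add_mult_distrib_mat[of _ p p _ _ p] mult_smult_assoc_mat[of _ p p _ p])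
  moreover have "e \<cdot>\<^sub>m (?L' * S_proj s e A B L)
      = e \<cdot>\<^sub>m (?L' * A * L) + (e * e) \<cdot>\<^sub>m (?L' * ?L' * A) + e \<cdot>\<^sub>m (?L' * B)"
    unfolding S_proj_def using A B L star_mat_carrier[OF L]
    by (simp add: mult_carrier_square assoc_mult_mat[of _ p p _ p _ p] mult_add_distrib_mat[of _ p p _ p]
        mult_smult_distrib[of _ p p _ p] add_smult_distrib_left_mat[of _ p p] smult_smult_mat)
  moreover have "A * L * L + e \<cdot>\<^sub>m (?L' * A * L) + B * L
      = e \<cdot>\<^sub>m (?L' * A * L) + (e * e) \<cdot>\<^sub>m (?L' * ?L' * A) + e \<cdot>\<^sub>m (?L' * B)"
  proof (rule eq_matI)
    fix i j assume "i < dim_row (e \<cdot>\<^sub>m (?L' * A * L) + (e * e) \<cdot>\<^sub>m (?L' * ?L' * A) + e \<cdot>\<^sub>m (?L' * B))"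
      and "j < dim_col (e \<cdot>\<^sub>m (?L' * A * L) + (e * e) \<cdot>\<^sub>m (?L' * ?L' * A) + e \<cdot>\<^sub>m (?L' * B))"
    then have ij: "i < p" "j < p" using B L by auto
    have "(A * L * L) $$ (i, j) + (B * L) $$ (i, j) = - C $$ (i, j)"
      using arg_cong[OF quad, of "\<lambda>N. N $$ (i, j)"] ij A B C L by (simp add: eq_neg_iff_add_eq_0)
    moreover have "(?L' * ?L' * A) $$ (i, j) + e * (?L' * B) $$ (i, j) = - C $$ (i, j)"
      using arg_cong[OF quad', of "\<lambda>N. N $$ (i, j)"] ij A B C L by (simp add: eq_neg_iff_add_eq_0)
    ultimately show "(A * L * L + e \<cdot>\<^sub>m (?L' * A * L) + B * L) $$ (i, j)
        = (e \<cdot>\<^sub>m (?L' * A * L) + (e * e) \<cdot>\<^sub>m (?L' * ?L' * A) + e \<cdot>\<^sub>m (?L' * B)) $$ (i, j)"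
      using ij A B L e by (simp add: algebra_simps)
  qed (use A B L in auto)
  ultimately show ?thesis by simp
qed

lemma mult_eq_smult_star_mat_mult:
  fixes S L :: "'a::conjugatable_field mat"
  assumes S: "S \<in> carrier_mat p p" and L: "L \<in> carrier_mat p p"
    and sS: "star_mat s S = e2 \<cdot>\<^sub>m S" and SL: "S * L = (e1 * e2) \<cdot>\<^sub>m (star_mat s L * S)"
  shows "S * L = e1 \<cdot>\<^sub>m star_mat s (S * L)"
proof -
  have "e1 \<cdot>\<^sub>m star_mat s (S * L) = e1 \<cdot>\<^sub>m (star_mat s L * (e2 \<cdot>\<^sub>m S))"
    using star_mat_mult[OF S L] sS by simp
  also have "\<dots> = (e1 * e2) \<cdot>\<^sub>m (star_mat s L * S)"
    using mult_smult_distrib[OF star_mat_carrier[OF L] S] by (simp add: smult_smult_mat)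
  finally show ?thesis using SL by simp
qed

lemma S_mat_eq_S_proj:
  assumes X: "X \<in> carrier_mat n p" and M: "M \<in> carrier_mat n n" and L: "L \<in> carrier_mat p p"
  shows "S_mat s e1 e2 M D X L
    = S_proj s (e1 * e2) (star_mat s X * M * X) (star_mat s X * D * X) L"
proof -
  have X': "star_mat s X \<in> carrier_mat p n" and L': "star_mat s L \<in> carrier_mat p p"
    using X L by simp_all
  have "star_mat s L * star_mat s X * M * X = star_mat s L * (star_mat s X * M * X)"
    using assoc_mult_mat[OF L' X' M] assoc_mult_mat[OF L' mult_carrier_mat[OF X' M] X] by simp
  then show ?thesis
    unfolding S_mat_def S_proj_def by simp
qed

lemma S_mat_structure:
  fixes M D K X L :: "'a::conjugatable_field mat"
  assumes e1: "e1 \<in> {1, -1}" and e2: "e2 \<in> {1, -1}"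
    and M: "M \<in> carrier_mat n n" and D: "D \<in> carrier_mat n n" and K: "K \<in> carrier_mat n n"
    and X: "X \<in> carrier_mat n p" and L: "L \<in> carrier_mat p p"
    and sM: "star_mat s M = e1 \<cdot>\<^sub>m M" and sD: "star_mat s D = e2 \<cdot>\<^sub>m D" and sK: "star_mat s K = e1 \<cdot>\<^sub>m K"
    and inv: "invariant_pair M D K X L"
  shows "let S = S_mat s e1 e2 M D X L in
           star_mat s S = e2 \<cdot>\<^sub>m S \<and>
           S * L = (e1 * e2) \<cdot>\<^sub>m (star_mat s L * S) \<and>
           S * L = e1 \<cdot>\<^sub>m star_mat s (S * L)"
proof -
  let ?X' = "star_mat s X"
  let ?A = "?X' * M * X" and ?B = "?X' * D * X" and ?C = "?X' * K * X"
  have A: "?A \<in> carrier_mat p p" and B: "?B \<in> carrier_mat p p" and C: "?C \<in> carrier_mat p p"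
    using M D K X by auto
  have sA: "star_mat s ?A = e1 \<cdot>\<^sub>m ?A" and sB: "star_mat s ?B = e2 \<cdot>\<^sub>m ?B"
    and sC: "star_mat s ?C = e1 \<cdot>\<^sub>m ?C"
    using star_mat_congruence M D K X sM sD sK conjugate_sign[OF e1] conjugate_sign[OF e2] by blast+
  have quad: "?A * L * L + ?B * L + ?C = 0\<^sub>m p p"
    using invariant_pair_mult_left[OF inv M D K X L star_mat_carrier[OF X]] .
  have herm: "star_mat s (S_proj s (e1 * e2) ?A ?B L) = e2 \<cdot>\<^sub>m S_proj s (e1 * e2) ?A ?B L"
    using star_mat_S_proj[OF A B L e1 e2 sA sB] .
  have comm: "S_proj s (e1 * e2) ?A ?B L * L
      = (e1 * e2) \<cdot>\<^sub>m (star_mat s L * S_proj s (e1 * e2) ?A ?B L)"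
    using S_proj_mult_commute[OF A B C L _ quad star_mat_quadratic[OF A B C L e1 e2 sA sB sC quad]]
      e1 e2 by auto
  show ?thesis
    using herm comm mult_eq_smult_star_mat_mult[OF S_proj_carrier[OF A B L] L herm comm]
    by (simp add: S_mat_eq_S_proj[OF X M L] Let_def)
qed

theorem corollary2p3:
  shows "(\<forall>(s::star_op) (e1::complex) (e2::complex) (n::nat) (p::nat) (M::complex mat) (D::complex mat) (K::complex mat) (X::complex mat) (L::complex mat).
           e1 \<in> {1, -1} \<longrightarrow> e2 \<in> {1, -1} \<longrightarrow>
           M \<in> carrier_mat n n \<longrightarrow> D \<in> carrier_mat n n \<longrightarrow> K \<in> carrier_mat n n \<longrightarrow>
           X \<in> carrier_mat n p \<longrightarrow> L \<in> carrier_mat p p \<longrightarrow>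
           star_mat s M = e1 \<cdot>\<^sub>m M \<longrightarrow> star_mat s D = e2 \<cdot>\<^sub>m D \<longrightarrow> star_mat s K = e1 \<cdot>\<^sub>m K \<longrightarrow>
           invariant_pair M D K X L \<longrightarrow>
           (let S = S_mat s e1 e2 M D X L in
              star_mat s S = e2 \<cdot>\<^sub>m S \<and>
              S * L = (e1 * e2) \<cdot>\<^sub>m (star_mat s L * S) \<and>
              S * L = e1 \<cdot>\<^sub>m star_mat s (S * L)))
       \<and>
       (\<forall>(s::star_op) (e1::real) (e2::real) (n::nat) (p::nat) (M::real mat) (D::real mat) (K::real mat) (X::real mat) (L::real mat).
           e1 \<in> {1, -1} \<longrightarrow> e2 \<in> {1, -1} \<longrightarrow>
           M \<in> carrier_mat n n \<longrightarrow> D \<in> carrier_mat n n \<longrightarrow> K \<in> carrier_mat n n \<longrightarrow>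
           X \<in> carrier_mat n p \<longrightarrow> L \<in> carrier_mat p p \<longrightarrow>
           star_mat s M = e1 \<cdot>\<^sub>m M \<longrightarrow> star_mat s D = e2 \<cdot>\<^sub>m D \<longrightarrow> star_mat s K = e1 \<cdot>\<^sub>m K \<longrightarrow>
           invariant_pair M D K X L \<longrightarrow>
           (let S = S_mat s e1 e2 M D X L in
              star_mat s S = e2 \<cdot>\<^sub>m S \<and>
              S * L = (e1 * e2) \<cdot>\<^sub>m (star_mat s L * S) \<and>
              S * L = e1 \<cdot>\<^sub>m star_mat s (S * L)))"
  by (intro conjI allI impI; rule S_mat_structure; assumption)

end
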